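(* For $k\in\mathbb{N}$, the formula $\mathsf{F}^{|k\rangle}(X\times\Theta)=\sum_{m,n=0}^\infty\frac{1}{2\pi}\int_{X\times\Theta}e^{i\theta(m-n)}L_{\min\{m,k\}}(r^2)L_{\min\{n,k\}}(r^2)e^{-r^2}\,d(r^2)\,d\theta\,|m\rangle\langle n|$ defines a phase shift covariant phase space observable whose angle margin is the covariant phase observable $\mathsf{F}^{|k\rangle}(\mathbb{R}_+\times\Theta)=\sum_{m,n}c_{mn}\frac{1}{2\pi}\int_\Theta e^{i\theta(m-n)}d\theta\,|m\rangle\langle n|$ with phase matrix $c_{mn}=\delta_{\min\{m,k\},\min\{n,k\}}$. In particular the angle margin of $\mathsf{F}^{|0\rangle}$ is the canonical phase $\mathsf{E}_{\mathrm{can}}$. Its radial margin is $\mathsf{F}^{|k\rangle}(X\times[0,2\pi))=\sum_{m=0}^{k}c_{mm}(X)|m\rangle\langle m|+c_{kk}(X)\sum_{m=k+1}^\infty|m\rangle\langle m|$, where $c_{mm}(X)=\int_X L_m(r^2)^2e^{-r^2}d(r^2)$.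
   Context: $\mathcal{H}\simeq L^2(\mathbb{R})$ with number basis $\{|n\rangle\}$ and number operator $N$. $L_j$ denotes the $j$-th Laguerre polynomial. $\mathbb{C}\simeq\mathbb{R}_+\times[0,2\pi)$ via polar coordinates $re^{i\theta}$, $X\times\Theta=\{re^{i\theta}:r\in X,\theta\in\Theta\}$, and $d(r^2)=2r\,dr$. A phase shift covariant phase space observable is a POVM $\mathsf{P}$ on $\mathcal{B}(\mathbb{C})$ with $e^{i\theta N}\mathsf{P}(X\times\Theta)e^{-i\theta N}=\mathsf{P}(X\times(\Theta\dot{+}\theta))$ ($\dot{+}$ addition mod $2\pi$). The canonical phase is $\mathsf{E}_{\mathrm{can}}(\Theta)=\sum_{m,n}\frac{1}{2\pi}\int_\Theta e^{i(m-n)\theta}d\theta\,|m\rangle\langle n|$. *)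

theory Defs
  imports "HOL-Analysis.Analysis"
begin

definition laguerre :: "nat \<Rightarrow> real \<Rightarrow> real" where
  "laguerre j x = (\<Sum>i\<le>j. real (j choose i) * (-1) ^ i * x ^ i / fact i)"

text \<open>Operators on H = l2(N) are represented by their matrix elements
  A m n = <m|A|n> in the number basis.\<close>
definition psd_matrix :: "(nat \<Rightarrow> nat \<Rightarrow> complex) \<Rightarrow> bool" where
  "psd_matrix A \<longleftrightarrow> (\<forall>F c. finite F \<longrightarrow>
      (\<Sum>m\<in>F. \<Sum>n\<in>F. cnj (c m) * A m n * c n) \<in> \<real> \<and>
      0 \<le> Re (\<Sum>m\<in>F. \<Sum>n\<in>F. cnj (c m) * A m n * c n))"

definition povm :: "'a measure \<Rightarrow> ('a set \<Rightarrow> nat \<Rightarrow> nat \<Rightarrow> complex) \<Rightarrow> bool" where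
  "povm M P \<longleftrightarrow>
     (\<forall>A \<in> sets M. psd_matrix (P A)) \<and>
     (\<forall>m n. P (space M) m n = (if m = n then 1 else 0)) \<and>
     (\<forall>B :: nat \<Rightarrow> 'a set. range B \<subseteq> sets M \<longrightarrow> disjoint_family B \<longrightarrow>
        (\<forall>m n. (\<lambda>i. P (B i) m n) sums P (\<Union>i. B i) m n))"

definition polar :: "real set \<Rightarrow> real set \<Rightarrow> complex set" where
  "polar X \<Theta> = {complex_of_real r * cis t | r t. r \<in> X \<and> t \<in> \<Theta>}"

definition shift_mod :: "real set \<Rightarrow> real \<Rightarrow> real set" where
  "shift_mod \<Theta> \<theta> = {t \<in> {0..<2*pi}. \<exists>s\<in>\<Theta>. \<exists>j::int. t = s + \<theta> + 2 * pi * of_int j}"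

definition cov_phase_space_obs :: "(complex set \<Rightarrow> nat \<Rightarrow> nat \<Rightarrow> complex) \<Rightarrow> bool" where
  "cov_phase_space_obs P \<longleftrightarrow> povm (borel :: complex measure) P \<and>
     (\<forall>X \<Theta> \<theta> m n. X \<in> sets borel \<longrightarrow> X \<subseteq> {0..} \<longrightarrow>
        \<Theta> \<in> sets borel \<longrightarrow> \<Theta> \<subseteq> {0..<2*pi} \<longrightarrow>
        P (polar X (shift_mod \<Theta> \<theta>)) m n
          = cis (\<theta> * of_int (int m - int n)) * P (polar X \<Theta>) m n)"

definition cov_phase_obs :: "(real set \<Rightarrow> nat \<Rightarrow> nat \<Rightarrow> complex) \<Rightarrow> bool" where
  "cov_phase_obs E \<longleftrightarrow> povm (restrict_space borel {0..<2*pi}) E \<and>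
     (\<forall>\<Theta> \<theta> m n. \<Theta> \<in> sets borel \<longrightarrow> \<Theta> \<subseteq> {0..<2*pi} \<longrightarrow>
        E (shift_mod \<Theta> \<theta>) m n = cis (\<theta> * of_int (int m - int n)) * E \<Theta> m n)"

definition E_can :: "real set \<Rightarrow> nat \<Rightarrow> nat \<Rightarrow> complex" where
  "E_can \<Theta> m n = complex_of_real (1 / (2*pi)) *
     (LINT t:\<Theta>|lborel. cis (of_int (int m - int n) * t))"

text \<open>The observable F^{|k>}, with the integral over Z taken in polar coordinates
  (r,theta), r >= 0, 0 <= theta < 2 pi, against d(r^2) d theta = 2 r dr d theta.\<close>
definition Fk :: "nat \<Rightarrow> complex set \<Rightarrow> nat \<Rightarrow> nat \<Rightarrow> complex" where
  "Fk k Z m n = complex_of_real (1 / (2*pi)) *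
     (LINT p:{p :: real \<times> real. 0 \<le> fst p \<and> 0 \<le> snd p \<and> snd p < 2*pi \<and>
                complex_of_real (fst p) * cis (snd p) \<in> Z}|lborel.
        cis (snd p * of_int (int m - int n)) *
        complex_of_real (laguerre (min m k) ((fst p)^2) * laguerre (min n k) ((fst p)^2)
                          * exp (- ((fst p)^2)) * (2 * fst p)))"

definition cdiag :: "nat \<Rightarrow> real set \<Rightarrow> real" where
  "cdiag m X = (LINT r:X|lborel. (laguerre m (r^2))^2 * exp (- (r^2)) * (2 * r))"

end

theory Submission
  imports Defs "HOL-Probability.Distributions"
begin

text \<open>In polar coordinates the density of F^|k> factorises into the angular factor
  e^(i theta (m - n)) and the radial factor L_min(m,k)(r^2) L_min(n,k)(r^2) e^(-r^2) 2r, so by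
  Fubini every matrix element on a product set X x Theta is an angular integral times a radial one.
  Over the full circle the angular integral is 2 pi delta_mn, and rotating Theta modulo 2 pi
  multiplies it by e^(i theta (m - n)); over [0, infinity) the radial integral is
  delta_(min(m,k), min(n,k)) by orthonormality of the Laguerre polynomials for e^(-x) dx, x = r^2.
  Normalisation, covariance and both margins follow from these two facts. Positivity holds because
  the density is a Gram kernel: summed against conj(c_m) c_n it becomes
  |sum_n c_n e^(-i n theta) L_min(n,k)(r^2)|^2 e^(-r^2) 2r. Sigma-additivity is that of the
  Lebesgue integral, and polar coordinates fail to be injective only on the null line r = 0.\<close>

section \<open>Orthonormality of the Laguerre polynomials\<close>

lemma alternating_sum_choose_mult_choose:
  "(\<Sum>i\<le>a. (-1)^i * of_nat (a choose i) * of_nat (i choose l)) =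
     (if l = a then (-1)^a else (0 :: 'a :: comm_ring_1))"
proof (cases "l \<le> a")
  case False
  then show ?thesis by (intro trans[OF sum.neutral]) (auto simp: binomial_eq_0)
next
  case True
  have "(\<Sum>i\<le>a. (-1)^i * of_nat (a choose i) * of_nat (i choose l))
      = (\<Sum>i\<in>{l..a}. (-1)^i * of_nat (a choose i) * (of_nat (i choose l) :: 'a))"
    by (rule sum.mono_neutral_right) (auto simp: binomial_eq_0)
  also have "\<dots> = (\<Sum>t\<le>a-l. (-1)^(t+l) * of_nat (a choose (t+l)) * of_nat ((t+l) choose l))"
    using sum.shift_bounds_cl_nat_ivl[of "\<lambda>i. (-1)^i * of_nat (a choose i) * (of_nat (i choose l) :: 'a)"
        0 l "a-l"] \<open>l \<le> a\<close>
    by (simp add: atLeast0AtMost)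
  also have "\<dots> = (\<Sum>t\<le>a-l. (-1)^l * of_nat (a choose l) * ((-1)^t * of_nat ((a-l) choose t)))"
  proof (rule sum.cong[OF refl])
    fix t assume "t \<in> {..a-l}"
    then have "(a choose (t+l)) * ((t+l) choose l) = (a choose l) * ((a-l) choose t)"
      using choose_mult[of l "t+l" a] \<open>l \<le> a\<close> by auto
    then have "of_nat (a choose (t+l)) * of_nat ((t+l) choose l)
        = (of_nat ((a choose l) * ((a-l) choose t)) :: 'a)"
      by (metis of_nat_mult)
    then show "(-1)^(t+l) * of_nat (a choose (t+l)) * of_nat ((t+l) choose l)
        = (-1)^l * of_nat (a choose l) * ((-1)^t * (of_nat ((a-l) choose t) :: 'a))"
      by (simp add: power_add algebra_simps)
  qed
  also have "\<dots> = (-1)^l * of_nat (a choose l) * (\<Sum>t\<le>a-l. (-1)^t * of_nat ((a-l) choose t))"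
    by (simp add: sum_distrib_left)
  also have "\<dots> = (if l = a then (-1)^a else 0)"
    using \<open>l \<le> a\<close> choose_alternating_sum[of "a - l", where 'a='a] by auto
  finally show ?thesis .
qed

lemma vandermonde_choose_choose: "(i + j) choose j = (\<Sum>l\<le>j. (i choose l) * (j choose l))"
  by (subst vandermonde[symmetric]) (auto intro!: sum.cong simp: binomial_symmetric[symmetric])

lemma alternating_sum_choose_mult_choose_add:
  "(\<Sum>i\<le>a. (-1)^i * of_nat (a choose i) * of_nat ((i+j) choose j)) =
     (-1)^a * (of_nat (j choose a) :: 'a :: comm_ring_1)"
proof -
  have "(\<Sum>i\<le>a. (-1)^i * of_nat (a choose i) * of_nat ((i+j) choose j))
      = (\<Sum>i\<le>a. \<Sum>l\<le>j.
          of_nat (j choose l) * ((-1)^i * of_nat (a choose i) * (of_nat (i choose l) :: 'a)))"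
    by (simp add: vandermonde_choose_choose sum_distrib_left ac_simps)
  also have "\<dots> = (\<Sum>l\<le>j.
      of_nat (j choose l) * (\<Sum>i\<le>a. (-1)^i * of_nat (a choose i) * (of_nat (i choose l) :: 'a)))"
    by (subst sum.swap) (simp add: sum_distrib_left)
  also have "\<dots> = (-1)^a * of_nat (j choose a)"
    by (cases "a \<le> j")
      (simp_all add: alternating_sum_choose_mult_choose if_distrib binomial_eq_0 cong: if_cong)
  finally show ?thesis .
qed

definition laguerre_coeff :: "nat \<Rightarrow> nat \<Rightarrow> real" where
  "laguerre_coeff a i = real (a choose i) * (-1)^i / fact i"

lemma laguerre_eq_coeff_sum: "laguerre a x = (\<Sum>i\<le>a. laguerre_coeff a i * x^i)"
  unfolding laguerre_def laguerre_coeff_def by (simp add: field_simps)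

text \<open>Since the integral of x^n e^(-x) over [0, infinity) is n!, the left-hand side is the
  integral of L_a L_b e^(-x).\<close>

lemma laguerre_coeff_moment_sum:
  "(\<Sum>j\<le>b. \<Sum>i\<le>a. laguerre_coeff a i * laguerre_coeff b j * fact (i+j)) = (if a = b then 1 else 0)"
proof -
  have fact_add: "fact (i+j) = fact i * fact j * real ((i+j) choose j)" for i j :: nat
  proof -
    have "real (fact j * fact i * ((i+j) choose j)) = real (fact (i+j))"
      using binomial_fact_lemma[of j "i+j"] by simp
    then show ?thesis by (simp only: of_nat_mult of_nat_fact) (simp add: ac_simps)
  qed
  have choose_swap: "(i+j) choose j = (i+j) choose i" for i j :: nat
    using binomial_symmetric[of j "i+j"] by simp
  have "(\<Sum>j\<le>b. \<Sum>i\<le>a. laguerre_coeff a i * laguerre_coeff b j * fact (i+j))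
      = (\<Sum>j\<le>b. (-1)^j * real (b choose j)
          * (\<Sum>i\<le>a. (-1)^i * real (a choose i) * real ((i+j) choose j)))"
    unfolding sum_distrib_left
    by (intro sum.cong refl) (simp add: laguerre_coeff_def fact_add field_simps choose_swap)
  also have "\<dots> = (-1)^a * (\<Sum>j\<le>b. (-1)^j * real (b choose j) * real (j choose a))"
    by (simp only: alternating_sum_choose_mult_choose_add) (simp add: sum_distrib_left ac_simps)
  also have "\<dots> = (if a = b then 1 else 0)"
    by (simp add: alternating_sum_choose_mult_choose)
  finally show ?thesis .
qed

lemma has_bochner_integral_radial_moment:
  "has_bochner_integral lborel
     (\<lambda>r::real. indicator {0..} r *\<^sub>R ((r^2)^n * exp (- (r^2)) * (2 * r))) (fact n)"
proof -
  have "(\<lambda>r::real. indicator {0..} r *\<^sub>R ((r^2)^n * exp (- (r^2)) * (2 * r)))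
      = (\<lambda>r. 2 * (indicator {0..} r *\<^sub>R (exp (- r\<^sup>2) * r^(2 * n + 1))))"
    by (auto simp: fun_eq_iff power_mult power_add)
  then show ?thesis
    using has_bochner_integral_mult_right[OF gaussian_moment_odd_pos, of 2 n] by simp
qed

definition radial_density :: "nat \<Rightarrow> nat \<Rightarrow> real \<Rightarrow> real" where
  "radial_density a b r = laguerre a (r^2) * laguerre b (r^2) * exp (- (r^2)) * (2 * r)"

lemma laguerre_orthonormal:
  "has_bochner_integral lborel (\<lambda>r. indicator {0..} r *\<^sub>R radial_density a b r)
     (if a = b then 1 else 0)"
proof -
  have "(\<lambda>r. indicator {0..} r *\<^sub>R radial_density a b r) =
     (\<lambda>r. \<Sum>j\<le>b. \<Sum>i\<le>a. laguerre_coeff a i * laguerre_coeff b j *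
        (indicator {0..} r *\<^sub>R ((r^2)^(i+j) * exp (- (r^2)) * (2 * r))))"
    by (auto simp: fun_eq_iff radial_density_def laguerre_eq_coeff_sum sum_distrib_left
        sum_distrib_right power_add ac_simps)
  moreover have "has_bochner_integral lborel
     (\<lambda>r. \<Sum>j\<le>b. \<Sum>i\<le>a. laguerre_coeff a i * laguerre_coeff b j *
        (indicator {0..} r *\<^sub>R ((r^2)^(i+j) * exp (- (r^2)) * (2 * r))))
     (\<Sum>j\<le>b. \<Sum>i\<le>a. laguerre_coeff a i * laguerre_coeff b j * fact (i+j))"
    by (intro has_bochner_integral_sum has_bochner_integral_mult_right
        has_bochner_integral_radial_moment)
  ultimately show ?thesis
    by (simp only: laguerre_coeff_moment_sum)
qed

lemma set_integrable_radial_density: "set_integrable lborel {0..} (radial_density a b)"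
  using laguerre_orthonormal unfolding set_integrable_def by (rule integrable.intros)

lemma set_integral_radial_density:
  "(LINT r:{0..}|lborel. radial_density a b r) = (if a = b then 1 else 0)"
  using laguerre_orthonormal unfolding set_lebesgue_integral_def
  by (rule has_bochner_integral_integral_eq)

section \<open>Angular integrals and product sets\<close>

lemma (in pair_sigma_finite) integrable_mult_fst_snd:
  fixes u :: "'a \<Rightarrow> 'c :: {real_normed_field, banach, second_countable_topology}"
  assumes u: "integrable M1 u" and v: "integrable M2 v"
  shows "integrable (M1 \<Otimes>\<^sub>M M2) (\<lambda>p. u (fst p) * v (snd p))"
proof (rule Fubini_integrable)
  have [measurable]: "u \<in> borel_measurable M1" "v \<in> borel_measurable M2"
    using u v by auto
  show "(\<lambda>p. u (fst p) * v (snd p)) \<in> borel_measurable (M1 \<Otimes>\<^sub>M M2)"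
    by measurable
  show "integrable M1 (\<lambda>x. \<integral>y. norm (u (fst (x, y)) * v (snd (x, y))) \<partial>M2)"
    using u by (simp add: norm_mult)
  show "AE x in M1. integrable M2 (\<lambda>y. u (fst (x, y)) * v (snd (x, y)))"
    using v by (intro AE_I2) simp
qed

lemma (in pair_sigma_finite) integral_mult_fst_snd:
  fixes u :: "'a \<Rightarrow> 'c :: {real_normed_field, banach, second_countable_topology}"
  assumes u: "integrable M1 u" and v: "integrable M2 v"
  shows "(\<integral>p. u (fst p) * v (snd p) \<partial>(M1 \<Otimes>\<^sub>M M2)) = integral\<^sup>L M1 u * integral\<^sup>L M2 v"
  using integral_fst'[OF integrable_mult_fst_snd[OF u v]] by simp

lemma set_integral_Times_mult:
  fixes f :: "real \<Rightarrow> complex" and g :: "real \<Rightarrow> real"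
  assumes g: "set_integrable lborel A g" and f: "set_integrable lborel T f"
  shows "set_integrable lborel (A \<times> T) (\<lambda>p. f (snd p) * complex_of_real (g (fst p)))"
    and "(LINT p:A \<times> T|lborel. f (snd p) * complex_of_real (g (fst p)))
          = (LINT t:T|lborel. f t) * complex_of_real (LINT r:A|lborel. g r)"
proof -
  define u where "u x = complex_of_real (indicator A x *\<^sub>R g x)" for x
  define v where "v y = indicator T y *\<^sub>R f y" for y
  have u: "integrable lborel u"
    using g unfolding u_def set_integrable_def by (rule integrable_of_real)
  have v: "integrable lborel v"
    using f unfolding v_def set_integrable_def .
  have eq: "(\<lambda>p. indicator (A \<times> T) p *\<^sub>R (f (snd p) * complex_of_real (g (fst p))))
      = (\<lambda>p. u (fst p) * v (snd p))"
    by (auto simp: fun_eq_iff u_def v_def indicator_times split: split_indicator)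
  show "set_integrable lborel (A \<times> T) (\<lambda>p. f (snd p) * complex_of_real (g (fst p)))"
    using lborel_pair.integrable_mult_fst_snd[OF u v]
    unfolding set_integrable_def eq lborel_prod .
  have "(LINT p:A \<times> T|lborel. f (snd p) * complex_of_real (g (fst p)))
      = integral\<^sup>L lborel u * integral\<^sup>L lborel v"
    using lborel_pair.integral_mult_fst_snd[OF u v]
    unfolding set_lebesgue_integral_def eq lborel_prod .
  also have "\<dots> = complex_of_real (LINT r:A|lborel. g r) * (LINT t:T|lborel. f t)"
    unfolding u_def v_def set_lebesgue_integral_def by (simp only: integral_complex_of_real)
  finally show "(LINT p:A \<times> T|lborel. f (snd p) * complex_of_real (g (fst p)))
          = (LINT t:T|lborel. f t) * complex_of_real (LINT r:A|lborel. g r)"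
    by (simp only: mult.commute)
qed

lemma set_borel_measurable_if_set_integrable:
  "set_integrable M A f \<Longrightarrow> set_borel_measurable M A f"
  unfolding set_integrable_def set_borel_measurable_def by (rule borel_measurable_integrable)

lemma set_integrable_cis:
  assumes "T \<in> sets borel" "T \<subseteq> {a..b}"
  shows "set_integrable lborel T (\<lambda>t. cis (t * d))"
proof -
  have "set_integrable lborel {a..b} (\<lambda>t. cis (t * d))"
    unfolding set_integrable_def
    by (intro borel_integrable_compact) (auto intro!: continuous_intros)
  then show ?thesis
    by (rule set_integrable_subset) (use assms in auto)
qed

lemma set_integral_cis_period:
  "(LINT t:{0..<2*pi}|lborel. cis (t * of_int d)) = (if d = 0 then 2*pi else 0)"
proof -
  have "(LINT t:{0..<2*pi}|lborel. cis (t * of_int d))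
      = (LINT t:{0..2*pi}|lborel. cis (t * of_int d))"
  proof (rule set_integral_cong_set)
    show "set_borel_measurable lborel {0..2*pi} (\<lambda>t. cis (t * of_int d))"
      "set_borel_measurable lborel {0..<2*pi} (\<lambda>t. cis (t * of_int d))"
      by (auto intro!: set_borel_measurable_if_set_integrable set_integrable_cis[of _ 0 "2*pi"])
    show "AE x in lborel. (x \<in> {0..2*pi}) = (x \<in> {0..<2*pi})"
      using AE_lborel_singleton[of "2*pi"] by eventually_elim auto
  qed
  also have "\<dots> = (LBINT t=ereal 0..ereal (2*pi). cis (t * of_int d))"
    by (rule interval_integral_Icc[symmetric]) simp
  also have "\<dots> = (if d = 0 then 2*pi else 0)"
  proof (cases "d = 0")
    case True
    have "(LBINT t=ereal 0..ereal (2*pi). cis (t * of_int d))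
        = complex_of_real (2*pi) - complex_of_real 0"
      by (rule interval_integral_FTC_finite)
         (auto simp: True has_vector_derivative_def scaleR_conv_of_real
           intro!: derivative_eq_intros intro: continuous_intros)
    then show ?thesis using True by simp
  next
    case False
    have "(LBINT t=ereal 0..ereal (2*pi). cis (t * of_int d))
        = cis (2*pi * of_int d) / (\<i> * of_int d) - cis (0 * of_int d) / (\<i> * of_int d)"
    proof (rule interval_integral_FTC_finite)
      fix x :: real
      let ?S = "{min 0 (2 * pi)..max 0 (2 * pi)}"
      have "((\<lambda>t. cis (t * of_int d)) has_vector_derivative (of_int d * (\<i> * cis (x * of_int d))))
          (at x within ?S)"
        unfolding has_vector_derivative_def
        by (auto intro!: derivative_eq_intros has_derivative_cis
            simp: scaleR_conv_of_real algebra_simps)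
      from has_vector_derivative_divide[OF this, of "\<i> * of_int d"] False
      show "((\<lambda>t. cis (t * of_int d) / (\<i> * of_int d)) has_vector_derivative cis (x * of_int d))
          (at x within ?S)"
        by simp
    qed (intro continuous_intros)
    then show ?thesis using False by simp
  qed
  finally show ?thesis .
qed

lemma obtain_angle_mod_2pi:
  obtains c :: real and q :: int where "0 \<le> c" "c < 2*pi" "\<theta> = c + 2*pi * of_int q"
proof
  let ?q = "\<lfloor>\<theta> / (2*pi)\<rfloor>"
  have "2*pi * of_int ?q \<le> \<theta>" "\<theta> < 2*pi * (of_int ?q + 1)"
    using floor_divide_lower[of "2*pi" \<theta>] floor_divide_upper[of "2*pi" \<theta>]
    by (simp_all add: ac_simps)
  then show "0 \<le> \<theta> - 2*pi * of_int ?q" "\<theta> - 2*pi * of_int ?q < 2*pi"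
    by (simp_all add: algebra_simps)
qed simp

lemma shift_mod_eq_Un:
  assumes T: "T \<subseteq> {0..<2*pi}" and c: "0 \<le> c" "c < 2*pi" and \<theta>: "\<theta> = c + 2*pi * of_int q"
  shows "shift_mod T \<theta> =
    {t. t - c \<in> T \<and> c \<le> t \<and> t < 2*pi} \<union> {t. t + (2*pi - c) \<in> T \<and> 0 \<le> t \<and> t < c}"
proof (intro set_eqI iffI)
  fix t assume "t \<in> shift_mod T \<theta>"
  then obtain s j where t: "0 \<le> t" "t < 2*pi" and s: "s \<in> T"
    and j: "t = s + \<theta> + 2*pi * of_int (j::int)"
    unfolding shift_mod_def by auto
  have s0: "0 \<le> s" "s < 2*pi" using s T by auto
  define n where "n = j + q"
  have tn: "t = s + c + 2*pi * of_int n" using j \<theta> by (simp add: n_def algebra_simps)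
  with t c s0 have "2*pi * of_int n < 2*pi * 1" "2*pi * (-2) < 2*pi * of_int n"
    by linarith+
  then have "of_int n < (1::real)" "(-2::real) < of_int n"
    using mult_less_cancel_left_pos[of "2*pi"]
    by (simp_all only: pi_gt_zero mult_pos_pos zero_less_numeral)
  then have "n = 0 \<or> n = -1"
    by linarith
  then have "t = s + c \<or> t = s + c - 2*pi"
    using tn by auto
  then show "t \<in> {t. t - c \<in> T \<and> c \<le> t \<and> t < 2*pi} \<union> {t. t + (2*pi - c) \<in> T \<and> 0 \<le> t \<and> t < c}"
    using s t s0 by auto
next
  fix t assume "t \<in> {t. t - c \<in> T \<and> c \<le> t \<and> t < 2*pi} \<union> {t. t + (2*pi - c) \<in> T \<and> 0 \<le> t \<and> t < c}"
  then show "t \<in> shift_mod T \<theta>"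
  proof
    assume "t \<in> {t. t - c \<in> T \<and> c \<le> t \<and> t < 2*pi}"
    moreover have "t = (t - c) + \<theta> + 2*pi * of_int (-q)" using \<theta> by simp
    ultimately show ?thesis
      using c unfolding shift_mod_def by (auto intro!: bexI[of _ "t - c"] exI[of _ "-q"])
  next
    assume "t \<in> {t. t + (2*pi - c) \<in> T \<and> 0 \<le> t \<and> t < c}"
    moreover have "t = (t + (2*pi - c)) + \<theta> + 2*pi * of_int (-q-1)"
      using \<theta> by (simp add: algebra_simps)
    ultimately show ?thesis
      using c unfolding shift_mod_def by (auto intro!: bexI[of _ "t + (2*pi - c)"] exI[of _ "-q-1"])
  qed
qed

lemma cis_add_multiple_2pi: "cis (x + 2*pi * of_int n) = cis x"
  using cis_mult[of x "2*pi * of_int n"] by simp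

lemma set_integral_cis_translate:
  assumes "\<And>s. b + s \<in> U \<longleftrightarrow> s \<in> T"
  shows "(LINT t:U|lborel. cis (t * of_int d))
    = cis (b * of_int d) * (LINT s:T|lborel. cis (s * of_int d))"
proof -
  have "(LINT t:U|lborel. cis (t * of_int d))
      = \<bar>1\<bar> *\<^sub>R (\<integral>s. indicator U (b + 1 * s) *\<^sub>R cis ((b + 1 * s) * of_int d) \<partial>lborel)"
    unfolding set_lebesgue_integral_def by (rule lborel_integral_real_affine) simp
  also have "(\<lambda>s. indicator U (b + 1 * s) *\<^sub>R cis ((b + 1 * s) * of_int d)) =
       (\<lambda>s. cis (b * of_int d) * (indicator T s *\<^sub>R cis (s * of_int d)))"
    using assms by (auto simp: fun_eq_iff indicator_def cis_mult distrib_right)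
  finally show ?thesis
    unfolding set_lebesgue_integral_def by (simp only: abs_one scaleR_one integral_mult_right_zero)
qed

lemma shift_mod_borel:
  assumes "T \<in> sets borel" "T \<subseteq> {0..<2*pi}"
  shows "shift_mod T \<theta> \<in> sets borel"
proof -
  obtain c q where c: "0 \<le> c" "c < 2*pi" "\<theta> = c + 2*pi * of_int q"
    by (rule obtain_angle_mod_2pi)
  have "{t. t + a \<in> T} \<in> sets borel" for a
    using assms(1) by measurable
  from this[of "-c"] this[of "2*pi - c"] show ?thesis
    unfolding shift_mod_eq_Un[OF assms(2) c] by (auto simp: Collect_conj_eq)
qed

lemma set_integral_cis_shift_mod:
  assumes T: "T \<in> sets borel" "T \<subseteq> {0..<2*pi}"
  shows "(LINT t:shift_mod T \<theta>|lborel. cis (t * of_int d))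
    = cis (\<theta> * of_int d) * (LINT t:T|lborel. cis (t * of_int d))"
proof -
  obtain c q where c: "0 \<le> c" "c < 2*pi" and \<theta>: "\<theta> = c + 2*pi * of_int q"
    by (rule obtain_angle_mod_2pi)
  define U1 where "U1 = {t. t - c \<in> T \<and> c \<le> t \<and> t < 2*pi}"
  define U2 where "U2 = {t. t + (2*pi - c) \<in> T \<and> 0 \<le> t \<and> t < c}"
  define T1 where "T1 = T \<inter> {..<2*pi - c}"
  define T2 where "T2 = T \<inter> {2*pi - c..}"
  have meas: "{t. t + a \<in> T} \<in> sets borel" for a
    using T(1) by measurable
  have "U1 = {t. t + (- c) \<in> T} \<inter> {c..<2*pi}" "U2 = {t. t + (2*pi - c) \<in> T} \<inter> {0..<c}"
    unfolding U1_def U2_def by auto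
  then have U12: "U1 \<in> sets borel" "U2 \<in> sets borel"
    using meas[of "-c"] meas[of "2*pi - c"] by auto
  have T_split: "(LINT s:T1|lborel. cis (s * of_int d)) + (LINT s:T2|lborel. cis (s * of_int d))
      = (LINT s:T|lborel. cis (s * of_int d))"
  proof -
    have "T = T1 \<union> T2" "T1 \<inter> T2 = {}" "T1 \<in> sets borel" "T2 \<in> sets borel"
      using T unfolding T1_def T2_def by auto
    moreover have "T1 \<subseteq> {0..2*pi}" "T2 \<subseteq> {0..2*pi}"
      using T unfolding T1_def T2_def by auto
    ultimately show ?thesis
      using set_integral_Un[of T1 T2 lborel] set_integrable_cis[of _ 0 "2*pi"] by metis
  qed
  have "(LINT t:shift_mod T \<theta>|lborel. cis (t * of_int d))
      = (LINT t:U1|lborel. cis (t * of_int d)) + (LINT t:U2|lborel. cis (t * of_int d))"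
    unfolding shift_mod_eq_Un[OF T(2) c \<theta>] U1_def[symmetric] U2_def[symmetric]
    by (rule set_integral_Un)
      (use U12 c in \<open>auto simp: U1_def U2_def intro!: set_integrable_cis[of _ 0 "2*pi"]\<close>)
  also have "(LINT t:U1|lborel. cis (t * of_int d))
      = cis (c * of_int d) * (LINT s:T1|lborel. cis (s * of_int d))"
    by (rule set_integral_cis_translate) (use T(2) in \<open>auto simp: U1_def T1_def\<close>)
  also have "(LINT t:U2|lborel. cis (t * of_int d))
      = cis ((c - 2*pi) * of_int d) * (LINT s:T2|lborel. cis (s * of_int d))"
    by (rule set_integral_cis_translate) (use T(2) in \<open>auto simp: U2_def T2_def\<close>)
  also have "cis ((c - 2*pi) * of_int d) = cis (c * of_int d)"
    using cis_add_multiple_2pi[of "c * of_int d" "-d"] by (simp add: algebra_simps)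
  also have "cis (c * of_int d) * (LINT s:T1|lborel. cis (s * of_int d))
      + cis (c * of_int d) * (LINT s:T2|lborel. cis (s * of_int d))
      = cis (c * of_int d) * (LINT s:T|lborel. cis (s * of_int d))"
    by (simp only: T_split distrib_left[symmetric])
  also have "cis (c * of_int d) = cis (\<theta> * of_int d)"
    using cis_add_multiple_2pi[of "c * of_int d" "q * d"] by (simp add: \<theta> algebra_simps)
  finally show ?thesis .
qed

section \<open>Polar coordinates\<close>

definition polar_preimage :: "complex set \<Rightarrow> (real \<times> real) set" where
  "polar_preimage Z =
     {p. 0 \<le> fst p \<and> 0 \<le> snd p \<and> snd p < 2*pi \<and> complex_of_real (fst p) * cis (snd p) \<in> Z}"

definition Fk_density :: "nat \<Rightarrow> nat \<Rightarrow> nat \<Rightarrow> real \<times> real \<Rightarrow> complex" where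
  "Fk_density k m n p =
     cis (snd p * of_int (int m - int n))
       * complex_of_real (radial_density (min m k) (min n k) (fst p))"

lemma Fk_eq_set_integral:
  "Fk k Z m n = complex_of_real (1/(2*pi)) * (LINT p:polar_preimage Z|lborel. Fk_density k m n p)"
  by (simp add: Fk_def polar_preimage_def Fk_density_def radial_density_def)

lemma polar_preimage_subset: "polar_preimage Z \<subseteq> {0..} \<times> {0..<2*pi}"
  by (auto simp: polar_preimage_def)

lemma set_integrable_Fk_density: "set_integrable lborel ({0..} \<times> {0..<2*pi}) (Fk_density k m n)"
  unfolding Fk_density_def
  by (rule set_integral_Times_mult(1)[OF set_integrable_radial_density
        set_integrable_cis[of _ 0 "2*pi"]]) auto

lemma Times_in_sets_lborel:
  assumes "X \<in> sets borel" "T \<in> sets borel"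
  shows "X \<times> T \<in> sets (lborel :: (real \<times> real) measure)"
proof -
  have "X \<times> T \<in> sets (lborel \<Otimes>\<^sub>M lborel)"
    using assms by (intro pair_measureI) (simp_all only: sets_lborel)
  then show ?thesis
    by (simp only: lborel_prod)
qed

lemma polar_preimage_in_sets_lborel:
  assumes "Z \<in> sets borel"
  shows "polar_preimage Z \<in> sets lborel"
proof -
  have "(\<lambda>p::real \<times> real. complex_of_real (fst p) * cis (snd p)) \<in> borel_measurable borel"
    by (intro borel_measurable_continuous_onI continuous_intros)
  from measurable_sets[OF this assms] Times_in_sets_lborel[of "{0..}" "{0..<2*pi}"]
  have "({0..} \<times> {0..<2*pi}) \<inter> ((\<lambda>p. complex_of_real (fst p) * cis (snd p)) -` Z) \<in> sets lborel"
    by auto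
  also have "({0..} \<times> {0..<2*pi}) \<inter> ((\<lambda>p. complex_of_real (fst p) * cis (snd p)) -` Z)
      = polar_preimage Z"
    by (auto simp: polar_preimage_def)
  finally show ?thesis .
qed

lemma AE_lborel_fst_nonzero: "AE p in (lborel :: (real \<times> real) measure). fst p \<noteq> 0"
proof (rule AE_I')
  show "{0::real} \<times> (UNIV :: real set) \<in> null_sets lborel"
    unfolding lborel_prod[symmetric]
    by (auto simp: null_sets_def lborel.emeasure_pair_measure_Times intro!: pair_measureI)
qed auto

lemma cis_inj_on_period:
  assumes "s \<in> {0..<2*pi}" "t \<in> {0..<2*pi}" "cis s = cis t"
  shows "s = t"
proof -
  obtain n :: int where n: "s = t + 2*pi * of_int n"
    using assms(3) sin_cos_eq_iff by (metis cis.sel)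
  moreover have "0 \<le> s" "s < 2*pi" "0 \<le> t" "t < 2*pi"
    using assms(1,2) by auto
  ultimately have "2*pi * of_int n < 2*pi * 1" "2*pi * (-1) < 2*pi * of_int n"
    by linarith+
  then have "of_int n < (1::real)" "(-1::real) < of_int n"
    using mult_less_cancel_left_pos[of "2*pi"]
    by (simp_all only: pi_gt_zero mult_pos_pos zero_less_numeral)
  then have "n = 0"
    by linarith
  with n show ?thesis
    by simp
qed

text \<open>The origin has every angle, so its preimage is the whole segment {0} x [0, 2 pi).\<close>

lemma polar_preimage_polar:
  assumes X: "X \<subseteq> {0..}" and T: "T \<subseteq> {0..<2*pi}"
  shows "polar_preimage (polar X T) =
    (X \<times> T - {p. fst p = 0}) \<union> (if 0 \<in> X \<and> T \<noteq> {} then {0} \<times> {0..<2*pi} else {})"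
proof (intro set_eqI iffI)
  fix p :: "real \<times> real"
  assume pZ: "p \<in> polar_preimage (polar X T)"
  obtain r t where p: "p = (r, t)"
    by fastforce
  from pZ p obtain r' t' where r': "r' \<in> X" "t' \<in> T"
    and eq: "complex_of_real r * cis t = complex_of_real r' * cis t'"
    and r: "0 \<le> r" and t: "t \<in> {0..<2*pi}"
    by (auto simp: polar_preimage_def polar_def)
  have "r = r'"
    using arg_cong[OF eq, of norm] r r' X by (auto simp: norm_mult)
  show "p \<in> (X \<times> T - {p. fst p = 0}) \<union> (if 0 \<in> X \<and> T \<noteq> {} then {0} \<times> {0..<2*pi} else {})"
  proof (cases "r = 0")
    case True
    then show ?thesis using \<open>r = r'\<close> p r' t by auto
  next
    case False
    with eq \<open>r = r'\<close> have "t = t'"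
      using t r'(2) T by (intro cis_inj_on_period) auto
    then show ?thesis using \<open>r = r'\<close> p r' False by auto
  qed
next
  fix p :: "real \<times> real"
  assume p: "p \<in> (X \<times> T - {p. fst p = 0}) \<union> (if 0 \<in> X \<and> T \<noteq> {} then {0} \<times> {0..<2*pi} else {})"
  show "p \<in> polar_preimage (polar X T)"
  proof (cases "fst p = 0")
    case True
    with p obtain t' where "0 \<in> X" "t' \<in> T" "0 \<le> snd p" "snd p < 2*pi"
      by (auto split: if_splits)
    then have "complex_of_real 0 * cis t' \<in> polar X T"
      unfolding polar_def by blast
    then show ?thesis
      using True \<open>0 \<le> snd p\<close> \<open>snd p < 2*pi\<close> by (simp add: polar_preimage_def)
  next
    case False
    with p have "fst p \<in> X" "snd p \<in> T"
      by (auto split: if_splits)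
    with X T show ?thesis
      unfolding polar_preimage_def polar_def by auto
  qed
qed

lemma polar_preimage_polar_in_sets_lborel:
  assumes "X \<in> sets borel" "X \<subseteq> {0..}" "T \<in> sets borel" "T \<subseteq> {0..<2*pi}"
  shows "polar_preimage (polar X T) \<in> sets lborel"
proof -
  have "{p :: real \<times> real. fst p = 0} = {0} \<times> UNIV"
    by auto
  then show ?thesis
    unfolding polar_preimage_polar[OF assms(2,4)]
    using Times_in_sets_lborel assms by auto
qed

lemma Fk_polar:
  assumes X: "X \<in> sets borel" "X \<subseteq> {0..}" and T: "T \<in> sets borel" "T \<subseteq> {0..<2*pi}"
  shows "Fk k (polar X T) m n = complex_of_real (1/(2*pi))
    * (LINT t:T|lborel. cis (t * of_int (int m - int n)))
    * complex_of_real (LINT r:X|lborel. radial_density (min m k) (min n k) r)"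
proof -
  have XT: "X \<times> T \<in> sets lborel"
    using X T by (intro Times_in_sets_lborel)
  have "(LINT p:polar_preimage (polar X T)|lborel. Fk_density k m n p)
      = (LINT p:X \<times> T|lborel. Fk_density k m n p)"
  proof (rule set_integral_cong_set)
    show "set_borel_measurable lborel (X \<times> T) (Fk_density k m n)"
      "set_borel_measurable lborel (polar_preimage (polar X T)) (Fk_density k m n)"
      using X T XT polar_preimage_polar_in_sets_lborel[OF X T] polar_preimage_subset
      by (auto intro!: set_borel_measurable_if_set_integrable
          set_integrable_subset[OF set_integrable_Fk_density])
    show "AE p in lborel. (p \<in> X \<times> T) = (p \<in> polar_preimage (polar X T))"
      using AE_lborel_fst_nonzero by eventually_elim (auto simp: polar_preimage_polar[OF X(2) T(2)])
  qed
  also have "\<dots> = (LINT t:T|lborel. cis (t * of_int (int m - int n)))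
    * complex_of_real (LINT r:X|lborel. radial_density (min m k) (min n k) r)"
    unfolding Fk_density_def
    by (rule set_integral_Times_mult(2)[OF set_integrable_subset[OF set_integrable_radial_density]
          set_integrable_cis[of _ 0 "2*pi"]])
      (use X T in auto)
  finally show ?thesis
    by (simp add: Fk_eq_set_integral)
qed

section \<open>The observable F^|k>\<close>

lemma psd_matrix_scaleR:
  assumes "0 \<le> r" "psd_matrix A"
  shows "psd_matrix (\<lambda>m n. complex_of_real r * A m n)"
  unfolding psd_matrix_def
proof (intro allI impI)
  fix F :: "nat set" and c :: "nat \<Rightarrow> complex"
  assume "finite F"
  have "(\<Sum>m\<in>F. \<Sum>n\<in>F. cnj (c m) * (complex_of_real r * A m n) * c n)
      = complex_of_real r * (\<Sum>m\<in>F. \<Sum>n\<in>F. cnj (c m) * A m n * c n)"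
    by (simp add: sum_distrib_left ac_simps)
  with assms \<open>finite F\<close> show "(\<Sum>m\<in>F. \<Sum>n\<in>F. cnj (c m) * (complex_of_real r * A m n) * c n) \<in> \<real> \<and>
      0 \<le> Re (\<Sum>m\<in>F. \<Sum>n\<in>F. cnj (c m) * (complex_of_real r * A m n) * c n)"
    unfolding psd_matrix_def by (auto elim!: Reals_cases)
qed

lemma psd_matrix_set_integral_gram:
  fixes K :: "'b \<Rightarrow> nat \<Rightarrow> nat \<Rightarrow> complex" and a :: "'b \<Rightarrow> nat \<Rightarrow> complex"
  assumes S: "S \<in> sets M"
    and int: "\<And>m n. set_integrable M S (\<lambda>p. K p m n)"
    and gram: "\<And>p m n. p \<in> S \<Longrightarrow> K p m n = cnj (a p m) * a p n"
  shows "psd_matrix (\<lambda>m n. LINT p:S|M. K p m n)"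
  unfolding psd_matrix_def
proof (intro allI impI)
  fix F :: "nat set" and c :: "nat \<Rightarrow> complex"
  assume "finite F"
  have int': "integrable M (\<lambda>p. indicator S p *\<^sub>R (cnj (c m) * K p m n * c n))" for m n
    using int[of m n] unfolding set_integrable_def[symmetric] by simp
  have "(\<Sum>m\<in>F. \<Sum>n\<in>F. cnj (c m) * (LINT p:S|M. K p m n) * c n)
      = (\<Sum>m\<in>F. \<Sum>n\<in>F. LINT p:S|M. cnj (c m) * K p m n * c n)"
    by simp
  also have "\<dots> = (LINT p:S|M. \<Sum>m\<in>F. \<Sum>n\<in>F. cnj (c m) * K p m n * c n)"
    unfolding set_lebesgue_integral_def scaleR_sum_right using int' by (simp add: integrable_sum)
  also have "\<dots> = (LINT p:S|M. complex_of_real ((cmod (\<Sum>n\<in>F. a p n * c n))\<^sup>2))"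
  proof (rule set_lebesgue_integral_cong[OF S], intro allI impI)
    fix p assume "p \<in> S"
    then have "(\<Sum>m\<in>F. \<Sum>n\<in>F. cnj (c m) * K p m n * c n)
        = (\<Sum>n\<in>F. a p n * c n) * cnj (\<Sum>m\<in>F. a p m * c m)"
      by (simp add: gram sum_product ac_simps) (rule sum.swap)
    then show "(\<Sum>m\<in>F. \<Sum>n\<in>F. cnj (c m) * K p m n * c n)
        = complex_of_real ((cmod (\<Sum>n\<in>F. a p n * c n))\<^sup>2)"
      by (simp only: complex_norm_square)
  qed
  also have "\<dots> = complex_of_real (LINT p:S|M. (cmod (\<Sum>n\<in>F. a p n * c n))\<^sup>2)"
    by (rule set_integral_complex_of_real)
  finally show "(\<Sum>m\<in>F. \<Sum>n\<in>F. cnj (c m) * (LINT p:S|M. K p m n) * c n) \<in> \<real> \<and>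
      0 \<le> Re (\<Sum>m\<in>F. \<Sum>n\<in>F. cnj (c m) * (LINT p:S|M. K p m n) * c n)"
    unfolding set_lebesgue_integral_def by (simp add: integral_nonneg_AE)
qed

lemma psd_matrix_Fk:
  assumes Z: "polar_preimage Z \<in> sets lborel"
  shows "psd_matrix (Fk k Z)"
proof -
  define a where "a p n = complex_of_real (sqrt (exp (- (fst p)\<^sup>2) * (2 * fst p))
      * laguerre (min n k) ((fst p)\<^sup>2)) * cis (- (snd p * real n))" for p :: "real \<times> real" and n
  have "Fk_density k m n p = cnj (a p m) * a p n" if "p \<in> polar_preimage Z" for p m n
  proof -
    have "0 \<le> exp (- (fst p)\<^sup>2) * (2 * fst p)"
      using that by (simp add: polar_preimage_def)
    then have "cnj (a p m) * a p n = complex_of_real (radial_density (min m k) (min n k) (fst p))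
        * (cis (snd p * real m) * cis (- (snd p * real n)))"
      by (simp add: a_def radial_density_def cis_cnj ac_simps flip: of_real_mult)
    also have "cis (snd p * real m) * cis (- (snd p * real n))
        = cis (snd p * of_int (int m - int n))"
      by (simp add: cis_mult algebra_simps)
    finally show ?thesis
      by (simp add: Fk_density_def)
  qed
  with Z have "psd_matrix (\<lambda>m n. LINT p:polar_preimage Z|lborel. Fk_density k m n p)"
    by (intro psd_matrix_set_integral_gram)
      (auto intro: set_integrable_subset[OF set_integrable_Fk_density _ polar_preimage_subset])
  from psd_matrix_scaleR[OF _ this, of "1/(2*pi)"] show ?thesis
    by (simp add: fun_eq_iff Fk_eq_set_integral[abs_def])
qed

lemma set_integral_sums:
  fixes f :: "_ \<Rightarrow> 'a :: {banach, second_countable_topology}"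
  assumes A: "\<And>i. A i \<in> sets M" and disj: "disjoint_family A"
    and int: "set_integrable M (\<Union>i. A i) f"
  shows "(\<lambda>i. LINT x:A i|M. f x) sums (LINT x:(\<Union>i. A i)|M. f x)"
proof -
  define B where "B n = (\<Union>i<n. A i)" for n
  have UB: "(\<Union>n. B n) = (\<Union>i. A i)"
    by (auto simp: B_def)
  have "incseq B"
    unfolding B_def incseq_def by (intro allI impI UN_mono) auto
  moreover have "B n \<in> sets M" for n
    unfolding B_def using A by auto
  ultimately have "(\<lambda>n. LINT x:B n|M. f x) \<longlonglongrightarrow> (LINT x:(\<Union>n. B n)|M. f x)"
    using set_integral_cont_up[of B M f] int by (simp add: UB)
  moreover have "set_integrable M (A i) f" for i
    by (rule set_integrable_subset[OF int A]) auto
  then have "(LINT x:B n|M. f x) = (\<Sum>i<n. LINT x:A i|M. f x)" for n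
    unfolding B_def using disj A
    by (intro set_integral_finite_Union) (auto simp: disjoint_family_on_def)
  ultimately show ?thesis
    unfolding sums_def UB by simp
qed

lemma polar_preimage_UNIV: "polar_preimage UNIV = polar_preimage (polar {0..} {0..<2*pi})"
  by (auto simp: polar_preimage_polar) (auto simp: polar_preimage_def)

lemma Fk_polar_full_angle:
  assumes "X \<in> sets borel" "X \<subseteq> {0..}"
  shows "Fk k (polar X {0..<2*pi}) m n =
    (if m = n then complex_of_real (LINT r:X|lborel. radial_density (min m k) (min m k) r) else 0)"
  using Fk_polar[OF assms, of "{0..<2*pi}" k m n] set_integral_cis_period[of "int m - int n"]
  by (cases "m = n") (auto simp: field_simps)

lemma Fk_UNIV: "Fk k UNIV m n = (if m = n then 1 else 0)"
proof -
  have "Fk k UNIV m n = Fk k (polar {0..} {0..<2*pi}) m n"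
    by (simp only: Fk_eq_set_integral polar_preimage_UNIV)
  then show ?thesis
    by (simp add: Fk_polar_full_angle set_integral_radial_density)
qed

lemma Fk_polar_shift_mod:
  assumes X: "X \<in> sets borel" "X \<subseteq> {0..}" and T: "T \<in> sets borel" "T \<subseteq> {0..<2*pi}"
  shows "Fk k (polar X (shift_mod T \<theta>)) m n
    = cis (\<theta> * of_int (int m - int n)) * Fk k (polar X T) m n"
proof -
  have "shift_mod T \<theta> \<in> sets borel" "shift_mod T \<theta> \<subseteq> {0..<2*pi}"
    using shift_mod_borel[OF T] by (auto simp: shift_mod_def)
  then show ?thesis
    by (simp only: Fk_polar[OF X] Fk_polar[OF X T] set_integral_cis_shift_mod[OF T])
      (simp add: ac_simps)
qed

lemma povm_Fk: "povm borel (Fk k)"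
  unfolding povm_def
proof (intro conjI ballI allI impI)
  fix Z :: "complex set"
  assume "Z \<in> sets borel"
  then show "psd_matrix (Fk k Z)"
    by (intro psd_matrix_Fk polar_preimage_in_sets_lborel)
next
  fix m n
  show "Fk k (space borel) m n = (if m = n then 1 else 0)"
    by (simp add: Fk_UNIV)
next
  fix B :: "nat \<Rightarrow> complex set" and m n
  assume B: "range B \<subseteq> sets borel" and disj: "disjoint_family B"
  have "(\<lambda>i. LINT p:polar_preimage (B i)|lborel. Fk_density k m n p)
      sums (LINT p:(\<Union>i. polar_preimage (B i))|lborel. Fk_density k m n p)"
  proof (rule set_integral_sums)
    show "polar_preimage (B i) \<in> sets lborel" for i
      using B by (intro polar_preimage_in_sets_lborel) auto
    then show "set_integrable lborel (\<Union>i. polar_preimage (B i)) (Fk_density k m n)"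
      using polar_preimage_subset
      by (intro set_integrable_subset[OF set_integrable_Fk_density]) auto
    show "disjoint_family (\<lambda>i. polar_preimage (B i))"
      using disj by (auto simp: disjoint_family_on_def polar_preimage_def)
  qed
  moreover have "(\<Union>i. polar_preimage (B i)) = polar_preimage (\<Union>i. B i)"
    by (auto simp: polar_preimage_def)
  ultimately have "(\<lambda>i. LINT p:polar_preimage (B i)|lborel. Fk_density k m n p)
      sums (LINT p:polar_preimage (\<Union>i. B i)|lborel. Fk_density k m n p)"
    by simp
  then show "(\<lambda>i. Fk k (B i) m n) sums Fk k (\<Union>i. B i) m n"
    unfolding Fk_eq_set_integral by (rule sums_mult)
qed

lemma Fk_angle_margin:
  assumes "T \<in> sets borel" "T \<subseteq> {0..<2*pi}"
  shows "Fk k (polar {0..} T) m n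
    = (if min m k = min n k then 1 else 0) * complex_of_real (1 / (2*pi))
      * (LINT t:T|lborel. cis (t * of_int (int m - int n)))"
  by (subst Fk_polar) (use assms in \<open>auto simp: set_integral_radial_density\<close>)

lemma cov_phase_obs_Fk_angle_margin: "cov_phase_obs (\<lambda>\<Theta>. Fk k (polar {0..} \<Theta>))"
  unfolding cov_phase_obs_def povm_def
proof (intro conjI ballI allI impI)
  fix A
  assume "A \<in> sets (restrict_space borel {0..<2*pi})"
  then show "psd_matrix (Fk k (polar {0..} A))"
    by (intro psd_matrix_Fk polar_preimage_polar_in_sets_lborel)
      (auto simp: sets_restrict_space_iff)
next
  fix m n
  show "Fk k (polar {0..} (space (restrict_space borel {0..<2*pi}))) m n = (if m = n then 1 else 0)"
    by (simp add: Fk_polar_full_angle set_integral_radial_density)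
next
  fix B :: "nat \<Rightarrow> real set" and m n
  assume B: "range B \<subseteq> sets (restrict_space borel {0..<2*pi})" and disj: "disjoint_family B"
  have "B i \<in> sets (restrict_space borel {0..<2*pi})" for i
    using B by auto
  then have Bi: "B i \<in> sets borel" "B i \<subseteq> {0..<2*pi}" for i
    by (auto simp: sets_restrict_space_iff)
  then have UB: "(\<Union>i. B i) \<in> sets borel" "(\<Union>i. B i) \<subseteq> {0..<2*pi}"
    by auto
  have "(\<lambda>i. LINT t:B i|lborel. cis (t * of_int (int m - int n)))
      sums (LINT t:(\<Union>i. B i)|lborel. cis (t * of_int (int m - int n)))"
    by (rule set_integral_sums) (use Bi disj UB in \<open>auto intro!: set_integrable_cis[of _ 0 "2*pi"]\<close>)
  from sums_mult[OF this, of "(if min m k = min n k then 1 else 0) * complex_of_real (1 / (2*pi))"]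
  show "(\<lambda>i. Fk k (polar {0..} (B i)) m n) sums Fk k (polar {0..} (\<Union>i. B i)) m n"
    by (simp only: Fk_angle_margin[OF Bi] Fk_angle_margin[OF UB])
next
  fix T \<theta> m n
  assume "T \<in> sets borel" "T \<subseteq> {0..<2*pi}"
  then show "Fk k (polar {0..} (shift_mod T \<theta>)) m n
      = cis (\<theta> * of_int (int m - int n)) * Fk k (polar {0..} T) m n"
    by (intro Fk_polar_shift_mod) auto
qed

lemma Fk_radial_margin:
  assumes "X \<in> sets borel" "X \<subseteq> {0..}"
  shows "Fk k (polar X {0..<2*pi}) m n =
    (if m = n then complex_of_real (if m \<le> k then cdiag m X else cdiag k X) else 0)"
proof -
  have "radial_density j j = (\<lambda>r. (laguerre j (r\<^sup>2))\<^sup>2 * exp (- r\<^sup>2) * (2 * r))" for j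
    by (simp add: fun_eq_iff radial_density_def power2_eq_square)
  then show ?thesis
    using assms by (simp add: Fk_polar_full_angle cdiag_def min_def)
qed

lemma cov_phase_space_obs_Fk: "cov_phase_space_obs (Fk k)"
  unfolding cov_phase_space_obs_def using povm_Fk Fk_polar_shift_mod by blast

lemma Fk_zero_angle_margin:
  assumes "\<Theta> \<in> sets borel" "\<Theta> \<subseteq> {0..<2*pi}"
  shows "Fk 0 (polar {0..} \<Theta>) m n = E_can \<Theta> m n"
  using assms by (simp add: Fk_angle_margin E_can_def mult.commute)

theorem mainTheorem8:
  fixes k :: nat
  shows "cov_phase_space_obs (Fk k)
    \<and> cov_phase_obs (\<lambda>\<Theta>. Fk k (polar {0..} \<Theta>))
    \<and> (\<forall>\<Theta> m n. \<Theta> \<in> sets borel \<longrightarrow> \<Theta> \<subseteq> {0..<2*pi} \<longrightarrow>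
         Fk k (polar {0..} \<Theta>) m n
           = (if min m k = min n k then 1 else 0) * complex_of_real (1 / (2*pi)) *
             (LINT t:\<Theta>|lborel. cis (t * of_int (int m - int n))))
    \<and> (\<forall>\<Theta> m n. \<Theta> \<in> sets borel \<longrightarrow> \<Theta> \<subseteq> {0..<2*pi} \<longrightarrow>
         Fk 0 (polar {0..} \<Theta>) m n = E_can \<Theta> m n)
    \<and> (\<forall>X m n. X \<in> sets borel \<longrightarrow> X \<subseteq> {0..} \<longrightarrow>
         Fk k (polar X {0..<2*pi}) m n
           = (if m = n then complex_of_real (if m \<le> k then cdiag m X else cdiag k X) else 0))"
  by (blast intro: cov_phase_space_obs_Fk cov_phase_obs_Fk_angle_margin Fk_angle_margin
      Fk_zero_angle_margin Fk_radial_margin)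

end
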